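(* For positive integers $m, r$ with $r$ even and $m \geq 4$, $C_m(r) = 3$.
   Context: For positive integers $m, r$, $C_m(r)$ is the minimum odd positive integer $n$ such that there exist vectors $v_1, \ldots, v_n \in \mathbb{Z}^m$ (not necessarily distinct) with $|v_i| = \sqrt{r}$ for every $i$ and $v_1 + \cdots + v_n = \mathbf{0}$; if no such odd $n$ exists, $C_m(r) = 0$. Here $|\cdot|$ is the Euclidean norm. *)

theory Defs
  imports Main
begin

(* Vectors in Z^m are represented as integer lists of length m.
   |v| = sqrt r  iff  the sum of squares of the coordinates equals r. *)

definition sq_norm :: "int list \<Rightarrow> int" where
  "sq_norm v = (\<Sum>x\<leftarrow>v. x ^ 2)"

definition zero_sum_config :: "nat \<Rightarrow> nat \<Rightarrow> nat \<Rightarrow> bool" where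
  "zero_sum_config m r n \<longleftrightarrow>
     (\<exists>vs :: nat \<Rightarrow> int list.
        (\<forall>i<n. length (vs i) = m \<and> sq_norm (vs i) = int r) \<and>
        (\<forall>j<m. (\<Sum>i<n. vs i ! j) = 0))"

definition C :: "nat \<Rightarrow> nat \<Rightarrow> nat" where
  "C m r = (if \<exists>n. odd n \<and> zero_sum_config m r n
            then (LEAST n. odd n \<and> zero_sum_config m r n) else 0)"

end

(* By Lagrange's four-square theorem, r/2 = a^2 + b^2 + c^2 + d^2 for some integers a, b, c, d.
   The three vectors
     (a-b, a+b, c-d, c+d),  (-a-c, d-b, a-c, -d-b),  (b+c, -a-d, d-a, b-c)
   sum to zero and each has squared norm 2(a^2 + b^2 + c^2 + d^2) = r; padding with zeros
   gives three such vectors in Z^m for every m >= 4. One vector of positive norm is never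
   zero, so C_m(r) = 3.
   Lagrange's theorem is proved in the classical way: Euler's four-square identity reduces it
   to primes p; some multiple m p with 0 < m < p is a sum of four squares by pigeonhole on
   x^2 and -1 - y^2 modulo p, and Euler's descent lowers m to 1. *)
theory Submission
  imports Defs "HOL-Number_Theory.Number_Theory"
begin

subsection \<open>Lagrange's four-square theorem\<close>

definition sum_of_four_squares :: "int \<Rightarrow> bool" where
  "sum_of_four_squares n \<longleftrightarrow> (\<exists>a b c d. n = a^2 + b^2 + c^2 + d^2)"

lemma euler_four_square_identity:
  fixes a b c d w x y z :: int
  shows "(a^2 + b^2 + c^2 + d^2) * (w^2 + x^2 + y^2 + z^2) =
    (a*w + b*x + c*y + d*z)^2 + (a*x - b*w + c*z - d*y)^2 +
    (a*y - b*z - c*w + d*x)^2 + (a*z + b*y - c*x - d*w)^2"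
  unfolding power2_eq_square by (simp add: algebra_simps)

lemma sum_of_four_squares_mult:
  "sum_of_four_squares x \<Longrightarrow> sum_of_four_squares y \<Longrightarrow> sum_of_four_squares (x * y)"
  unfolding sum_of_four_squares_def by (metis euler_four_square_identity)

lemma exists_centered_residue:
  fixes x m :: int
  assumes "0 < m"
  obtains y where "[y = x] (mod m)" "4 * y^2 \<le> m^2"
proof
  define y where "y = (x + m div 2) mod m - m div 2"
  show "[y = x] (mod m)"
    unfolding y_def cong_def by (simp add: mod_diff_left_eq)
  have "- (m div 2) \<le> y" "y < m - m div 2"
    using assms unfolding y_def by auto
  then have "\<bar>2 * y\<bar> \<le> m"
    by linarith
  then have "(2 * y)^2 \<le> m^2"
    using abs_le_square_iff by fastforce
  then show "4 * y^2 \<le> m^2"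
    by (simp add: power_mult_distrib)
qed

(* Euler's division step: when the w, x, y, z are congruent to a, b, c, d, all four squares
   in Euler's identity for (m n)(m r) are divisible by m^2. *)
lemma sum_of_four_squares_divide:
  fixes m n r a b c d w x y z :: int
  assumes "m \<noteq> 0"
    and "[w = a] (mod m)" "[x = b] (mod m)" "[y = c] (mod m)" "[z = d] (mod m)"
    and n: "m * n = a^2 + b^2 + c^2 + d^2"
    and r: "w^2 + x^2 + y^2 + z^2 = m * r"
  shows "sum_of_four_squares (r * n)"
proof -
  define A where "A = a*w + b*x + c*y + d*z"
  define B where "B = a*x - b*w + c*z - d*y"
  define C where "C = a*y - b*z - c*w + d*x"
  define D where "D = a*z + b*y - c*x - d*w"
  have euler: "(m * n) * (m * r) = A^2 + B^2 + C^2 + D^2"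
    unfolding A_def B_def C_def D_def n r[symmetric] by (rule euler_four_square_identity)
  have "[A = a*a + b*b + c*c + d*d] (mod m)"
    unfolding A_def using assms by (intro cong_add cong_mult) (auto simp: cong_sym)
  then have "[A = m * n] (mod m)"
    using n by (simp add: power2_eq_square)
  then have "m dvd A"
    by (simp add: cong_def mod_eq_0_iff_dvd [symmetric])
  moreover have "[B = a*b - b*a + c*d - d*c] (mod m)"
    unfolding B_def using assms by (intro cong_add cong_mult cong_diff) (auto simp: cong_sym)
  then have "m dvd B"
    by (simp add: cong_0_iff)
  moreover have "[C = a*c - b*d - c*a + d*b] (mod m)"
    unfolding C_def using assms by (intro cong_add cong_mult cong_diff) (auto simp: cong_sym)
  then have "m dvd C"
    by (simp add: cong_0_iff)
  moreover have "[D = a*d + b*c - c*b - d*a] (mod m)"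
    unfolding D_def using assms by (intro cong_add cong_mult cong_diff) (auto simp: cong_sym)
  then have "m dvd D"
    by (simp add: cong_0_iff)
  ultimately obtain A' B' C' D' where "A = m * A'" "B = m * B'" "C = m * C'" "D = m * D'"
    by (auto simp: dvd_def)
  with euler have "m^2 * (r * n) = m^2 * (A'^2 + B'^2 + C'^2 + D'^2)"
    by (simp add: power_mult_distrib algebra_simps power2_eq_square)
  then have "r * n = A'^2 + B'^2 + C'^2 + D'^2"
    using assms(1) by simp
  then show ?thesis
    unfolding sum_of_four_squares_def by blast
qed

lemma square_dvd_sq_diff_if_cong:
  fixes m u v :: int
  assumes "[u = v] (mod m)" "m dvd 2 * u"
  shows "m^2 dvd v^2 - u^2"
proof -
  obtain k where v: "v = u + m * k"
    using assms(1) unfolding cong_iff_lin by blast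
  obtain l where "2 * u = m * l"
    using assms(2) by (auto simp: dvd_def)
  then have "v^2 - u^2 = m^2 * (l * k + k^2)"
    unfolding v by (simp add: algebra_simps power2_eq_square)
  then show ?thesis
    by simp
qed

lemma dvd_double_if_four_mult_square_eq:
  fixes m t :: int
  assumes "4 * t^2 = m^2"
  shows "m dvd 2 * t"
proof -
  have "(2 * t)^2 = m^2"
    using assms by (simp add: power_mult_distrib)
  then have "2 * t = m \<or> 2 * t = - m"
    using power2_eq_iff by blast
  then show ?thesis
    by auto
qed

lemma dvd_double_if_sum_squares_extreme:
  fixes m r w x y z :: int
  assumes "4 * w^2 \<le> m^2" "4 * x^2 \<le> m^2" "4 * y^2 \<le> m^2" "4 * z^2 \<le> m^2"
    and r: "w^2 + x^2 + y^2 + z^2 = m * r" and "r = 0 \<or> r = m"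
  shows "m dvd 2 * w \<and> m dvd 2 * x \<and> m dvd 2 * y \<and> m dvd 2 * z"
proof (cases "r = 0")
  case True
  then have "w^2 + x^2 + y^2 + z^2 = 0"
    using r by simp
  then have "w^2 = 0" "x^2 = 0" "y^2 = 0" "z^2 = 0"
    using zero_le_power2[of w] zero_le_power2[of x] zero_le_power2[of y]
      zero_le_power2[of z] by linarith+
  then show ?thesis
    by simp
next
  case False
  then have "w^2 + x^2 + y^2 + z^2 = m^2"
    using r assms(6) by (simp add: power2_eq_square)
  then have "4 * w^2 = m^2" "4 * x^2 = m^2" "4 * y^2 = m^2" "4 * z^2 = m^2"
    using assms(1-4) by linarith+
  then show ?thesis
    by (simp add: dvd_double_if_four_mult_square_eq)
qed

lemma centered_residues_four_squares:
  fixes m n a b c d :: int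
  assumes "0 < m" and abcd: "m * n = a^2 + b^2 + c^2 + d^2"
  obtains w x y z r where
    "[w = a] (mod m)" "[x = b] (mod m)" "[y = c] (mod m)" "[z = d] (mod m)"
    "4 * w^2 \<le> m^2" "4 * x^2 \<le> m^2" "4 * y^2 \<le> m^2" "4 * z^2 \<le> m^2"
    "w^2 + x^2 + y^2 + z^2 = m * r" "0 \<le> r" "r \<le> m"
proof -
  obtain w where w: "[w = a] (mod m)" "4 * w^2 \<le> m^2"
    using exists_centered_residue[OF \<open>0 < m\<close>] .
  obtain x where x: "[x = b] (mod m)" "4 * x^2 \<le> m^2"
    using exists_centered_residue[OF \<open>0 < m\<close>] .
  obtain y where y: "[y = c] (mod m)" "4 * y^2 \<le> m^2"
    using exists_centered_residue[OF \<open>0 < m\<close>] .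
  obtain z where z: "[z = d] (mod m)" "4 * z^2 \<le> m^2"
    using exists_centered_residue[OF \<open>0 < m\<close>] .
  have "[w^2 + x^2 + y^2 + z^2 = a^2 + b^2 + c^2 + d^2] (mod m)"
    using w x y z by (intro cong_add cong_pow) auto
  also have "[a^2 + b^2 + c^2 + d^2 = 0] (mod m)"
    unfolding abcd[symmetric] cong_def by simp
  finally obtain r where r: "w^2 + x^2 + y^2 + z^2 = m * r"
    by (auto simp: cong_0_iff dvd_def)
  have "m * r \<le> m * m"
    using w x y z r by (simp add: power2_eq_square)
  then have "r \<le> m"
    using \<open>0 < m\<close> by simp
  have "0 \<le> m * r"
    unfolding r[symmetric] by simp
  then have "0 \<le> r"
    using \<open>0 < m\<close> by (simp add: zero_le_mult_iff)
  show ?thesis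
    using that w x y z r \<open>0 \<le> r\<close> \<open>r \<le> m\<close> by blast
qed

lemma descent_step:
  fixes m p :: int
  assumes p: "prime p" and "1 < m" "m < p" and "sum_of_four_squares (m * p)"
  shows "\<exists>r. 0 < r \<and> r < m \<and> sum_of_four_squares (r * p)"
proof -
  obtain a b c d where abcd: "m * p = a^2 + b^2 + c^2 + d^2"
    using assms(4) sum_of_four_squares_def by blast
  have "0 < m"
    using assms(2) by simp
  obtain w x y z r where
    cong: "[w = a] (mod m)" "[x = b] (mod m)" "[y = c] (mod m)" "[z = d] (mod m)" and
    small: "4 * w^2 \<le> m^2" "4 * x^2 \<le> m^2" "4 * y^2 \<le> m^2" "4 * z^2 \<le> m^2" and
    r: "w^2 + x^2 + y^2 + z^2 = m * r" "0 \<le> r" "r \<le> m"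
    using centered_residues_four_squares[OF \<open>0 < m\<close> abcd] by blast
  have "r \<noteq> 0 \<and> r \<noteq> m"
  proof (rule ccontr)
    assume "\<not> (r \<noteq> 0 \<and> r \<noteq> m)"
    then have extreme: "r = 0 \<or> r = m"
      by simp
    then have "m dvd 2 * w" "m dvd 2 * x" "m dvd 2 * y" "m dvd 2 * z"
      using dvd_double_if_sum_squares_extreme[OF small r(1)] by simp_all
    then have "m^2 dvd (a^2 - w^2) + (b^2 - x^2) + (c^2 - y^2) + (d^2 - z^2)"
      using cong by (intro dvd_add square_dvd_sq_diff_if_cong) (simp_all add: cong_sym)
    then have "m^2 dvd m * p - m * r"
      using abcd r(1) by (simp add: algebra_simps)
    moreover have "m^2 dvd m * r"
      using extreme by (auto simp: power2_eq_square)
    ultimately have "m * m dvd m * p"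
      by (metis diff_add_cancel dvd_add power2_eq_square)
    then have "m dvd p"
      using \<open>0 < m\<close> by simp
    then show False
      using prime_int_not_dvd[OF p] assms(2,3) by blast
  qed
  then have "0 < r" "r < m"
    using r(2,3) by auto
  moreover have "sum_of_four_squares (r * p)"
    using \<open>0 < m\<close> cong abcd r(1) by (intro sum_of_four_squares_divide) auto
  ultimately show ?thesis
    by blast
qed

lemma sum_of_four_squares_descent:
  fixes p m :: int
  assumes "prime p" "0 < m" "m < p" "sum_of_four_squares (m * p)"
  shows "sum_of_four_squares p"
  using assms(2-)
proof (induction "nat m" arbitrary: m rule: less_induct)
  case less
  show ?case
  proof (cases "m = 1")
    case True
    then show ?thesis
      using less.prems by simp
  next
    case False
    then have "1 < m"
      using less.prems(1) by simp
    then obtain r where "0 < r" "r < m" "sum_of_four_squares (r * p)"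
      using descent_step[OF \<open>prime p\<close>] less.prems(2,3) by blast
    then show ?thesis
      using less.hyps[of r] less.prems by simp
  qed
qed

lemma eq_if_prime_dvd_sq_diff:
  fixes p x x' :: int
  assumes "prime p" "0 \<le> x" "2 * x < p" "0 \<le> x'" "2 * x' < p"
    and "p dvd x^2 - x'^2"
  shows "x = x'"
proof -
  have "x^2 - x'^2 = (x - x') * (x + x')"
    by (simp add: algebra_simps power2_eq_square)
  then have "p dvd x - x' \<or> p dvd x + x'"
    using assms by (simp add: prime_dvd_mult_iff)
  moreover have "\<bar>x - x'\<bar> < p" "\<bar>x + x'\<bar> < p"
    using assms by auto
  ultimately show ?thesis
    using assms(2,4) by (smt (verit) dvd_imp_le_int)
qed

(* Pigeonhole: the (p+1)/2 values x^2 and the (p+1)/2 values -1 - y^2, for 0 <= x, y <= (p-1)/2,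
   are each pairwise distinct modulo p, so the two lists meet. *)
lemma prime_dvd_sq_add_sq_add_1:
  fixes p :: int
  assumes p: "prime p" "p \<noteq> 2"
  shows "\<exists>x y. 0 \<le> x \<and> 2 * x < p \<and> 0 \<le> y \<and> 2 * y < p \<and> p dvd x^2 + y^2 + 1"
proof (rule ccontr)
  assume none: "\<not> ?thesis"
  have "2 < p"
    using prime_ge_2_int[OF p(1)] p(2) by linarith
  define h where "h = (p - 1) div 2"
  have h: "2 * h = p - 1"
    using prime_odd_int[OF p(1) \<open>2 < p\<close>] unfolding h_def by presburger
  define S where "S = {0..h}"
  define f where "f x = x^2 mod p" for x
  define g where "g y = (-1 - y^2) mod p" for y
  have small: "0 \<le> x \<and> 2 * x < p" if "x \<in> S" for x
    using that h unfolding S_def by auto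
  have eq: "x = x'" if "x \<in> S" "x' \<in> S" "p dvd x^2 - x'^2" for x x'
    using eq_if_prime_dvd_sq_diff[OF p(1)] small that by blast
  have "inj_on f S"
    by (rule inj_onI) (use eq in \<open>auto simp: f_def mod_eq_dvd_iff\<close>)
  moreover have "inj_on g S"
    by (rule inj_onI) (use eq in \<open>force simp: g_def mod_eq_dvd_iff\<close>)
  moreover have "f ` S \<inter> g ` S = {}"
  proof (rule ccontr)
    assume "f ` S \<inter> g ` S \<noteq> {}"
    then obtain x y where "x \<in> S" "y \<in> S" "f x = g y"
      by auto
    then have "p dvd x^2 + y^2 + 1"
      unfolding f_def g_def by (simp add: mod_eq_dvd_iff algebra_simps)
    then show False
      using none small \<open>x \<in> S\<close> \<open>y \<in> S\<close> by blast
  qed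
  ultimately have "card (f ` S \<union> g ` S) = 2 * card S"
    by (simp add: card_Un_disjoint card_image S_def)
  moreover have "card (f ` S \<union> g ` S) \<le> card {0..<p}"
    using \<open>2 < p\<close> by (intro card_mono) (auto simp: f_def g_def)
  ultimately show False
    using h \<open>2 < p\<close> unfolding S_def by simp
qed

lemma sum_of_four_squares_prime:
  fixes p :: int
  assumes p: "prime p"
  shows "sum_of_four_squares p"
proof (cases "p = 2")
  case True
  then have "p = 1^2 + 1^2 + 0^2 + 0^2"
    by simp
  then show ?thesis
    unfolding sum_of_four_squares_def by blast
next
  case False
  obtain x y where xy: "0 \<le> x" "2 * x < p" "0 \<le> y" "2 * y < p" "p dvd x^2 + y^2 + 1"
    using prime_dvd_sq_add_sq_add_1[OF p False] by blast
  then obtain m where m: "x^2 + y^2 + 1 = p * m"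
    by (auto simp: dvd_def)
  have "0 < p"
    using prime_gt_0_int[OF p] .
  have "0 < x^2 + y^2 + 1"
    by (simp add: add_nonneg_pos)
  then have "0 < m"
    using m \<open>0 < p\<close> by (simp add: zero_less_mult_iff)
  have "(2 * x)^2 < p^2" "(2 * y)^2 < p^2"
    using xy by (intro power_strict_mono; simp)+
  then have "4 * x^2 < p^2" "4 * y^2 < p^2"
    by (simp_all add: power_mult_distrib)
  moreover have "1 < p^2"
    using prime_gt_1_int[OF p] by (simp add: one_less_power)
  ultimately have "p * m < p * p"
    using m by (simp add: power2_eq_square)
  then have "m < p"
    using \<open>0 < p\<close> by simp
  have "m * p = x^2 + y^2 + 1^2 + 0^2"
    using m by (simp add: algebra_simps)
  then have "sum_of_four_squares (m * p)"
    unfolding sum_of_four_squares_def by blast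
  then show ?thesis
    using sum_of_four_squares_descent[OF p \<open>0 < m\<close> \<open>m < p\<close>] by blast
qed

theorem lagrange_four_squares: "sum_of_four_squares (int n)"
proof (induction n rule: less_induct)
  case (less n)
  show ?case
  proof (cases "n \<le> 1")
    case True
    then have "int n = (int n)^2 + 0^2 + 0^2 + 0^2"
      by (cases n) auto
    then show ?thesis
      unfolding sum_of_four_squares_def by blast
  next
    case False
    then obtain q k where q: "prime q" "n = q * k"
      using prime_factor_nat[of n] by (auto simp: dvd_def)
    then have "0 < k"
      using False by (cases k) auto
    then have "k < n"
      using n_less_m_mult_n prime_gt_1_nat[OF q(1)] q(2) by simp
    then show ?thesis
      using less q sum_of_four_squares_mult sum_of_four_squares_prime by fastforce
  qed
qed

subsection \<open>Zero-sum configurations\<close>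

lemma sq_norm_append_replicate_0 [simp]: "sq_norm (xs @ replicate k 0) = sq_norm xs"
  unfolding sq_norm_def by (simp add: sum_list_replicate)

lemma zero_sum_config_mono:
  assumes "zero_sum_config m r n" "m \<le> m'"
  shows "zero_sum_config m' r n"
proof -
  obtain vs where vs: "\<forall>i<n. length (vs i) = m \<and> sq_norm (vs i) = int r"
    "\<forall>j<m. (\<Sum>i<n. vs i ! j) = 0"
    using assms(1) unfolding zero_sum_config_def by blast
  define ws where "ws i = vs i @ replicate (m' - m) 0" for i
  have "\<forall>i<n. length (ws i) = m' \<and> sq_norm (ws i) = int r"
    using vs(1) assms(2) unfolding ws_def by simp
  moreover have "(\<Sum>i<n. ws i ! j) = 0" if "j < m'" for j
  proof (cases "j < m")
    case True
    then show ?thesis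
      using vs unfolding ws_def by (simp add: nth_append)
  next
    case False
    then show ?thesis
      using vs(1) that unfolding ws_def by (simp add: nth_append)
  qed
  ultimately show ?thesis
    unfolding zero_sum_config_def by blast
qed

lemma not_zero_sum_config_1:
  assumes "0 < r"
  shows "\<not> zero_sum_config m r 1"
proof
  assume "zero_sum_config m r 1"
  then obtain v where v: "length v = m" "sq_norm v = int r" "\<forall>j<m. v ! j = 0"
    unfolding zero_sum_config_def by auto
  then have "v = replicate m 0"
    by (intro nth_equalityI) auto
  then have "sq_norm v = 0"
    unfolding sq_norm_def by (simp add: sum_list_replicate)
  with v(2) assms show False
    by simp
qed

lemma zero_sum_config_4_3:
  assumes "even r"
  shows "zero_sum_config 4 r 3"
proof -
  obtain a b c d where abcd: "int (r div 2) = a^2 + b^2 + c^2 + d^2"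
    using lagrange_four_squares sum_of_four_squares_def by blast
  have r: "int r = 2 * (a^2 + b^2 + c^2 + d^2)"
    using assms abcd by (metis dvd_mult_div_cancel of_nat_mult of_nat_numeral)
  define vs :: "nat \<Rightarrow> int list" where
    "vs i = (if i = 0 then [a-b, a+b, c-d, c+d]
             else if i = 1 then [-a-c, d-b, a-c, -d-b]
             else [b+c, -a-d, d-a, b-c])" for i
  have "length (vs i) = 4 \<and> sq_norm (vs i) = int r" for i
    unfolding vs_def r sq_norm_def by (simp add: power2_eq_square algebra_simps)
  moreover have "(\<Sum>i<3. vs i ! j) = 0" if "j < 4" for j
  proof -
    have "j = 0 \<or> j = 1 \<or> j = 2 \<or> j = 3"
      using that by auto
    then show ?thesis
      by (auto simp: numeral_3_eq_3 vs_def)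
  qed
  ultimately show ?thesis
    unfolding zero_sum_config_def by blast
qed

lemma C_eq_3:
  assumes "zero_sum_config m r 3" "\<not> zero_sum_config m r 1"
  shows "C m r = 3"
proof -
  have "(LEAST n. odd n \<and> zero_sum_config m r n) = 3"
  proof (rule Least_equality)
    fix n :: nat
    assume n: "odd n \<and> zero_sum_config m r n"
    then have "odd n" "n \<noteq> 1"
      using assms(2) by blast+
    then show "3 \<le> n"
      by presburger
  qed (use assms(1) in simp)
  then show ?thesis
    using assms(1) unfolding C_def by (metis odd_numeral)
qed

theorem lemma4:
  fixes m r :: nat
  assumes "0 < r" and "even r" and "4 \<le> m"
  shows "C m r = 3"
  using zero_sum_config_mono[OF zero_sum_config_4_3[OF \<open>even r\<close>] \<open>4 \<le> m\<close>]
    not_zero_sum_config_1[OF \<open>0 < r\<close>]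
  by (rule C_eq_3)

end
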